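(* Let $k\ge 2$ be an integer. Every maximal (with respect to inclusion) $k$-thin subset of $\mathbb{Z}_2^\omega$ is neither Borel nor meager.
   Context: $\mathbb{Z}_2^\omega$ is the Cantor cube of infinite binary sequences indexed by $\omega=\{0,1,2,\dots\}$, with the product topology. The Hamming distance is $\mathrm{hd}(x,y)=|\{i: x(i)\ne y(i)\}|\in\omega\cup\{\omega\}$, and the minimum distance of $T\subseteq\mathbb{Z}_2^\omega$ is $\mathrm{HD}(T)=\inf\{\mathrm{hd}(x,y): x,y\in T, x\ne y\}$ (infimum of the empty set being $+\infty$). A set $T$ is $k$-thin if $\mathrm{HD}(T)\ge k$. *)

theory Defs
  imports "HOL-Analysis.Analysis" "HOL-Library.Extended_Nat"
begin

text \<open>The Cantor cube Z_2^omega is the type nat \<Rightarrow> bool, carrying the product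
  topology of discrete copies of bool (library instance of topological_space on functions).\<close>

definition hd :: "(nat \<Rightarrow> bool) \<Rightarrow> (nat \<Rightarrow> bool) \<Rightarrow> enat" where
  "hd x y = (if finite {i. x i \<noteq> y i} then enat (card {i. x i \<noteq> y i}) else \<infinity>)"

definition k_thin :: "nat \<Rightarrow> (nat \<Rightarrow> bool) set \<Rightarrow> bool" where
  "k_thin k T \<longleftrightarrow> (\<forall>x\<in>T. \<forall>y\<in>T. x \<noteq> y \<longrightarrow> enat k \<le> hd x y)"

definition maximal_k_thin :: "nat \<Rightarrow> (nat \<Rightarrow> bool) set \<Rightarrow> bool" where
  "maximal_k_thin k T \<longleftrightarrow> k_thin k T \<and> (\<forall>S. k_thin k S \<and> T \<subseteq> S \<longrightarrow> S = T)"

definition nowhere_dense :: "'a::topological_space set \<Rightarrow> bool" where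
  "nowhere_dense A \<longleftrightarrow> interior (closure A) = {}"

definition meager :: "'a::topological_space set \<Rightarrow> bool" where
  "meager A \<longleftrightarrow> (\<exists>F::nat \<Rightarrow> 'a set. (\<forall>n. nowhere_dense (F n)) \<and> A \<subseteq> (\<Union>n. F n))"

end

theory Submission
  imports Defs
begin

text \<open>Bit-wise addition of a finitely supported vector is a homeomorphism of the Cantor
  cube, and maximality of a k-thin set T means that every point lies at finite Hamming distance
  from T. Hence countably many translates of T cover the cube, so T is not meager by the Baire
  category theorem. A Borel set has the Baire property; were T Borel, it would be comeager in
  a nonempty open set U. Flipping one coordinate n keeps a point of U inside U as soon as n lies
  beyond a basic cylinder around it, so comeagerness produces a point y with y and its flip both
  in T: two points of T at Hamming distance 1, although k \<ge> 2.\<close>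

lemma meager_iff_countable_cover:
  fixes A :: "'a::topological_space set"
  shows "meager A \<longleftrightarrow> (\<exists>\<G>. countable \<G> \<and> (\<forall>S\<in>\<G>. nowhere_dense S) \<and> A \<subseteq> \<Union>\<G>)"
proof
  assume "meager A"
  then obtain F :: "nat \<Rightarrow> 'a set" where "\<And>n. nowhere_dense (F n)" "A \<subseteq> (\<Union>n. F n)"
    unfolding meager_def by blast
  then show "\<exists>\<G>. countable \<G> \<and> (\<forall>S\<in>\<G>. nowhere_dense S) \<and> A \<subseteq> \<Union>\<G>"
    by (intro exI[of _ "range F"]) auto
next
  assume "\<exists>\<G>. countable \<G> \<and> (\<forall>S\<in>\<G>. nowhere_dense S) \<and> A \<subseteq> \<Union>\<G>"
  then obtain \<G> where \<G>: "countable \<G>" "\<forall>S\<in>\<G>. nowhere_dense S" "A \<subseteq> \<Union>\<G>"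
    by blast
  show "meager A"
  proof (cases "\<G> = {}")
    case True
    then show ?thesis
      using \<G>(3) unfolding meager_def nowhere_dense_def by (intro exI[of _ "\<lambda>_. {}"]) auto
  next
    case False
    then show ?thesis
      using \<G> unfolding meager_def by (intro exI[of _ "from_nat_into \<G>"]) (simp add: from_nat_into)
  qed
qed

lemma meager_subset: "meager B \<Longrightarrow> A \<subseteq> B \<Longrightarrow> meager A"
  unfolding meager_def by blast

lemma nowhere_dense_imp_meager: "nowhere_dense A \<Longrightarrow> meager A"
  unfolding meager_def by (intro exI[of _ "\<lambda>_. A"]) auto

lemma meager_empty [simp]: "meager {}"
  by (simp add: nowhere_dense_imp_meager nowhere_dense_def)

lemma meager_countable_UN:
  assumes "countable I" and "\<And>i. i \<in> I \<Longrightarrow> meager (A i)"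
  shows "meager (\<Union>i\<in>I. A i)"
proof -
  obtain \<G> where \<G>: "\<And>i. i \<in> I \<Longrightarrow> countable (\<G> i)"
      "\<And>i. i \<in> I \<Longrightarrow> \<forall>S\<in>\<G> i. nowhere_dense S"
      "\<And>i. i \<in> I \<Longrightarrow> A i \<subseteq> \<Union>(\<G> i)"
    using assms(2) unfolding meager_iff_countable_cover by metis
  have "countable (\<Union>i\<in>I. \<G> i)"
    using assms(1) \<G>(1) by (rule countable_UN)
  moreover have "\<forall>S\<in>(\<Union>i\<in>I. \<G> i). nowhere_dense S"
    using \<G>(2) by blast
  moreover have "(\<Union>i\<in>I. A i) \<subseteq> \<Union>(\<Union>i\<in>I. \<G> i)"
    using \<G>(3) by blast
  ultimately show ?thesis
    unfolding meager_iff_countable_cover by (intro exI conjI)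
qed

lemma meager_Un:
  assumes "meager A" and "meager B"
  shows "meager (A \<union> B)"
proof -
  have "meager (\<Union>S\<in>{A, B}. S)"
    by (rule meager_countable_UN) (use assms in auto)
  then show ?thesis
    by simp
qed

lemma nowhere_dense_closed_Diff_interior:
  assumes "closed C"
  shows "nowhere_dense (C - interior C)"
proof -
  have "closure (C - interior C) = C - interior C"
    using assms by (simp add: closed_Diff)
  moreover have "interior (C - interior C) \<subseteq> interior C"
    by (simp add: interior_mono)
  then have "interior (C - interior C) = {}"
    using interior_subset[of "C - interior C"] by blast
  ultimately show ?thesis
    unfolding nowhere_dense_def by simp
qed

lemma nowhere_dense_homeomorphic_image:
  assumes "homeomorphic_map euclidean euclidean f" and "nowhere_dense A"
  shows "nowhere_dense (f ` A)"
  using assms homeomorphic_map_closure_of[OF assms(1), of A]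
    homeomorphic_map_interior_of[OF assms(1), of "closure A"]
  unfolding nowhere_dense_def by simp

lemma meager_homeomorphic_image:
  assumes "homeomorphic_map euclidean euclidean f" and "meager A"
  shows "meager (f ` A)"
proof -
  obtain \<G> where \<G>: "countable \<G>" "\<forall>S\<in>\<G>. nowhere_dense S" "A \<subseteq> \<Union>\<G>"
    using assms(2) unfolding meager_iff_countable_cover by blast
  have "countable ((`) f ` \<G>)"
    using \<G>(1) by (rule countable_image)
  moreover have "\<forall>S\<in>(`) f ` \<G>. nowhere_dense S"
    using \<G>(2) nowhere_dense_homeomorphic_image[OF assms(1)] by blast
  moreover have "f ` A \<subseteq> \<Union>((`) f ` \<G>)"
    using \<G>(3) by blast
  ultimately show ?thesis
    unfolding meager_iff_countable_cover by (intro exI conjI)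
qed

lemma meager_interior_empty:
  fixes A :: "'a::topological_space set"
  assumes "locally_compact_space (euclidean :: 'a topology)"
    and "Hausdorff_space (euclidean :: 'a topology)"
    and "meager A"
  shows "interior A = {}"
proof -
  obtain F :: "nat \<Rightarrow> 'a set" where F: "\<And>n. nowhere_dense (F n)" "A \<subseteq> (\<Union>n. F n)"
    using assms(3) unfolding meager_def by blast
  have "euclidean interior_of (\<Union>n. closure (F n)) = {}"
  proof (rule Baire_category_alt)
    show "completely_metrizable_space (euclidean :: 'a topology) \<or>
        locally_compact_space (euclidean :: 'a topology) \<and> regular_space (euclidean :: 'a topology)"
      using assms(1,2) locally_compact_Hausdorff_imp_regular_space by blast
  qed (use F(1) in \<open>auto simp: nowhere_dense_def\<close>)
  moreover have "(\<Union>n. F n) \<subseteq> (\<Union>n. closure (F n))"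
    by (intro UN_mono closure_subset subset_refl)
  ultimately show ?thesis
    using F(2) by (metis euclidean_interior_of interior_mono order_trans subset_empty)
qed

definition baire_property :: "'a::topological_space set \<Rightarrow> bool" where
  "baire_property A \<longleftrightarrow> (\<exists>U. open U \<and> meager (sym_diff A U))"

lemma borel_imp_baire_property:
  assumes "A \<in> sets borel"
  shows "baire_property A"
proof -
  have "A \<in> sigma_sets UNIV {S. open S}"
    using assms by (simp add: sets_borel)
  then show ?thesis
  proof induction
    case (Basic A)
    then show ?case
      unfolding baire_property_def
      by (intro exI[of _ A]) simp
  next
    case Empty
    then show ?case
      unfolding baire_property_def
      by (intro exI[of _ "{}"]) simp
  next
    case (Compl A)
    then obtain U where U: "open U" "meager (sym_diff A U)"
      unfolding baire_property_def by blast
    have "meager (- U - interior (- U))"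
      using U(1) by (intro nowhere_dense_imp_meager nowhere_dense_closed_Diff_interior) auto
    then have "meager (sym_diff A U \<union> (- U - interior (- U)))"
      using U(2) by (rule meager_Un[rotated])
    moreover have "sym_diff (UNIV - A) (interior (- U)) \<subseteq> sym_diff A U \<union> (- U - interior (- U))"
      using interior_subset[of "- U"] by blast
    ultimately have "meager (sym_diff (UNIV - A) (interior (- U)))"
      by (rule meager_subset)
    then show ?case
      unfolding baire_property_def using open_interior by blast
  next
    case (Union A)
    then obtain U where U: "\<And>i. open (U i)" "\<And>i. meager (sym_diff (A i) (U i))"
      unfolding baire_property_def by metis
    have "meager (\<Union>i. sym_diff (A i) (U i))"
      using U(2) by (intro meager_countable_UN) auto
    moreover have "sym_diff (\<Union>i. A i) (\<Union>i. U i) \<subseteq> (\<Union>i. sym_diff (A i) (U i))"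
      by blast
    ultimately have "meager (sym_diff (\<Union>i. A i) (\<Union>i. U i))"
      by (rule meager_subset)
    moreover have "open (\<Union>i. U i)"
      using U(1) by blast
    ultimately show ?case
      unfolding baire_property_def by blast
  qed
qed

lemma Hausdorff_space_euclidean_t2: "Hausdorff_space (euclidean :: 'a::t2_space topology)"
  unfolding Hausdorff_space_def
proof (intro allI impI)
  fix x y :: 'a
  assume "x \<in> topspace euclidean \<and> y \<in> topspace euclidean \<and> x \<noteq> y"
  then obtain U V where "open U" "open V" "x \<in> U" "y \<in> V" "U \<inter> V = {}"
    using hausdorff[of x y] by auto
  then show "\<exists>U V. openin euclidean U \<and> openin euclidean V \<and> x \<in> U \<and> y \<in> V \<and> disjnt U V"
    by (intro exI[of _ U] exI[of _ V]) (simp add: disjnt_def)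
qed

lemma meager_fun_bool_interior_empty:
  fixes A :: "('a \<Rightarrow> bool) set"
  assumes "meager A"
  shows "interior A = {}"
proof (rule meager_interior_empty[OF _ _ assms])
  have "compact_space (euclidean :: bool topology)"
    by (simp add: compact_space_def finite_imp_compact)
  then have "compact_space (euclidean :: ('a \<Rightarrow> bool) topology)"
    by (metis compact_space_product_topology euclidean_product_topology)
  then show "locally_compact_space (euclidean :: ('a \<Rightarrow> bool) topology)"
    by (rule compact_imp_locally_compact_space)
  show "Hausdorff_space (euclidean :: ('a \<Rightarrow> bool) topology)"
    by (metis Hausdorff_space_euclidean_t2 Hausdorff_space_product_topology euclidean_product_topology)
qed

lemma open_fun_contains_cylinder:
  fixes U :: "(nat \<Rightarrow> 'a::topological_space) set"
  assumes "open U" and "x \<in> U"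
  obtains n where "{y. \<forall>i<n. y i = x i} \<subseteq> U"
proof -
  obtain X where X: "x \<in> (\<Pi>\<^sub>E i\<in>UNIV. X i)" "finite {i. X i \<noteq> UNIV}"
      "(\<Pi>\<^sub>E i\<in>UNIV. X i) \<subseteq> U"
    using product_topology_open_contains_basis[of "\<lambda>_. euclidean" UNIV U x] assms
    by (auto simp: open_fun_def)
  obtain n where "{i. X i \<noteq> UNIV} \<subseteq> {..<n}"
    using X(2) finite_nat_bounded by blast
  then have "{y. \<forall>i<n. y i = x i} \<subseteq> (\<Pi>\<^sub>E i\<in>UNIV. X i)"
    using X(1) by (force simp: PiE_iff)
  then have "{y. \<forall>i<n. y i = x i} \<subseteq> U"
    using X(3) by (rule order_trans)
  then show ?thesis
    by (rule that)
qed

definition translate :: "('a \<Rightarrow> bool) \<Rightarrow> ('a \<Rightarrow> bool) \<Rightarrow> ('a \<Rightarrow> bool)" where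
  "translate b x = (\<lambda>i. x i \<noteq> b i)"

lemma translate_translate [simp]: "translate b (translate b x) = x"
  unfolding translate_def by auto

lemma translate_diff_set: "{i. x i \<noteq> translate b x i} = {i. b i}"
  unfolding translate_def by auto

lemma homeomorphic_map_translate: "homeomorphic_map euclidean euclidean (translate b)"
proof (rule homeomorphic_map_involution)
  have "continuous_on UNIV (\<lambda>x. x i \<noteq> b i)" for i
    by (rule continuous_on_compose2[of UNIV "\<lambda>t. t \<noteq> b i"]) auto
  then show "continuous_map euclidean euclidean (translate b)"
    unfolding translate_def by (simp add: continuous_on_coordinatewise_then_product)
qed simp

lemma countable_finite_support: "countable {b :: 'a::countable \<Rightarrow> bool. finite {i. b i}}"
proof (rule countable_subset)
  show "{b :: 'a \<Rightarrow> bool. finite {i. b i}} \<subseteq> (\<lambda>D i. i \<in> D) ` Collect finite"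
    by (auto intro: image_eqI[of _ _ "Collect _"])
qed (simp add: countable_Collect_finite)

lemma hd_commute: "hd x y = hd y x"
proof -
  have "{i. x i \<noteq> y i} = {i. y i \<noteq> x i}"
    by auto
  then show ?thesis
    unfolding hd_def by simp
qed

lemma maximal_k_thin_near:
  assumes "maximal_k_thin k T" and "x \<notin> T"
  obtains t where "t \<in> T" and "hd x t < enat k"
proof -
  have "k_thin k T" and "\<not> k_thin k (insert x T)"
    using assms unfolding maximal_k_thin_def by auto
  then obtain t where "t \<in> T" "\<not> enat k \<le> hd x t"
    unfolding k_thin_def by (metis hd_commute insert_iff)
  then show ?thesis
    using that by (simp add: not_le)
qed

lemma maximal_k_thin_translates_cover:
  assumes "maximal_k_thin k T"
  shows "(\<Union>b\<in>{b. finite {i. b i}}. translate b ` T) = UNIV"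
proof -
  have "x \<in> (\<Union>b\<in>{b. finite {i. b i}}. translate b ` T)" for x
  proof -
    obtain t where t: "t \<in> T" "finite {i. x i \<noteq> t i}"
    proof (cases "x \<in> T")
      case True
      then show ?thesis
        using that[of x] by simp
    next
      case False
      then obtain t where "t \<in> T" "hd x t < enat k"
        using maximal_k_thin_near[OF assms] by blast
      then show ?thesis
        using that by (auto simp: hd_def split: if_splits)
    qed
    moreover have "x = translate (\<lambda>i. x i \<noteq> t i) t"
      unfolding translate_def by auto
    ultimately show ?thesis
      by blast
  qed
  then show ?thesis
    by blast
qed

lemma maximal_k_thin_not_meager:
  assumes "maximal_k_thin k T"
  shows "\<not> meager T"
proof
  assume "meager T"
  then have "meager (\<Union>b\<in>{b. finite {i. b i}}. translate b ` T)"
    by (intro meager_countable_UN countable_finite_support meager_homeomorphic_image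
        homeomorphic_map_translate)
  then have "interior (UNIV :: (nat \<Rightarrow> bool) set) = {}"
    using maximal_k_thin_translates_cover[OF assms] meager_fun_bool_interior_empty by metis
  then show False
    by simp
qed

lemma hd_flip_coordinate: "hd x (translate (\<lambda>i. i = n) x) = 1"
proof -
  have "{i. x i \<noteq> translate (\<lambda>i. i = n) x i} = {n}"
    unfolding translate_diff_set by simp
  then show ?thesis
    unfolding hd_def by (simp add: one_enat_def)
qed

lemma k_thin_baire_property_imp_meager:
  assumes "2 \<le> k" and "k_thin k T" and "baire_property T"
  shows "meager T"
proof (rule ccontr)
  assume not_meager: "\<not> meager T"
  obtain U where U: "open U" and "meager (sym_diff T U)"
    using assms(3) unfolding baire_property_def by blast
  define M where "M = sym_diff T U"
  have M: "meager M"
    unfolding M_def by fact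
  have "U \<noteq> {}"
    using M not_meager unfolding M_def by auto
  then obtain x where x: "x \<in> U"
    by blast
  obtain n where n: "{y. \<forall>i<n. y i = x i} \<subseteq> U"
    using open_fun_contains_cylinder[OF U x] by blast
  define \<sigma> where "\<sigma> = translate (\<lambda>i. i = n)"
  have hom: "homeomorphic_map euclidean euclidean \<sigma>"
    unfolding \<sigma>_def by (rule homeomorphic_map_translate)
  define W where "W = U \<inter> \<sigma> -` U"
  have "open W"
    using hom U unfolding W_def
    by (metis continuous_map_iff_continuous2 homeomorphic_imp_continuous_map open_Int open_vimage)
  moreover have "x \<in> W"
    using x n unfolding W_def \<sigma>_def translate_def by auto
  moreover have "interior (M \<union> \<sigma> ` M) = {}"
    using M hom by (intro meager_fun_bool_interior_empty meager_Un meager_homeomorphic_image)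
  ultimately have "\<not> W \<subseteq> M \<union> \<sigma> ` M"
    using interior_maximal by blast
  then obtain y where y: "y \<in> W" "y \<notin> M" "y \<notin> \<sigma> ` M"
    by blast
  have "\<sigma> y \<notin> M"
    using y(3) by (metis \<sigma>_def image_eqI translate_translate)
  then have "y \<in> T" and "\<sigma> y \<in> T"
    using y(1,2) unfolding M_def W_def by auto
  moreover have "y \<noteq> \<sigma> y"
    unfolding \<sigma>_def translate_def by (auto simp: fun_eq_iff)
  ultimately have "enat k \<le> hd y (\<sigma> y)"
    using assms(2) unfolding k_thin_def by blast
  then show False
    using assms(1) unfolding \<sigma>_def hd_flip_coordinate by (simp add: one_enat_def)
qed

theorem proposition18:
  fixes k :: nat and T :: "(nat \<Rightarrow> bool) set"
  assumes "k \<ge> 2" and "maximal_k_thin k T"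
  shows "T \<notin> sets borel \<and> \<not> meager T"
proof -
  have not_meager: "\<not> meager T"
    using assms(2) by (rule maximal_k_thin_not_meager)
  moreover have "T \<notin> sets borel"
  proof
    assume "T \<in> sets borel"
    then have "meager T"
      using assms k_thin_baire_property_imp_meager borel_imp_baire_property
      unfolding maximal_k_thin_def by blast
    with not_meager show False ..
  qed
  ultimately show ?thesis
    by blast
qed

end
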